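(* Let $T$ be a $g_t$-twisted trace on $\mathcal{A}$. Then the following are equivalent: (i) $T$ is positive; (ii) $T(a\rho(a))>0$ for every nonzero $a\in\mathcal{A}_0\cup\mathcal{A}_1$; (iii) for every nonzero $R\in\mathbb{C}[z,z^{-1}]$, \[ T\big(R(z)\overline{R}(z^{-1})\big)>0\quad\text{and}\quad e^{-\pi i c}\,T\big(P(q^{-1}z)R(q^{-1}z)\overline{R}(qz^{-1})\big)>0 . \]
   Context: Let $0<q<1$ and let $P$ be a Laurent polynomial with $n>0$ nonzero roots which is real-valued on the unit circle $S^1$. $\mathcal{A}=\mathcal{A}_P$ is the algebra generated by $u,v,Z,Z^{-1}$ with relations $ZZ^{-1}=Z^{-1}Z=1$, $ZuZ^{-1}=q^2u$, $ZvZ^{-1}=q^{-2}v$, $uv=P(q^{-1}Z)$, $vu=P(qZ)$; $\mathcal{A}_i=\{a: ZaZ^{-1}=q^{2i}a\}$, $\mathcal{A}_0=\mathbb{C}[Z,Z^{-1}]\cong\mathbb{C}[z,z^{-1}]$. Let $t\in\mathbb{C}$ with $|t|=1$, $t=e^{2\pi i c}$, $c\in[0,1)$; $g_t$ is the automorphism $u\mapsto tu$, $v\mapsto t^{-1}v$, $Z\mapsto Z$, and a $g_t$-twisted trace is a linear $T$ with $T(ab)=T(bg_t(a))$. Let $\rho$ be the antilinear automorphism of $\mathcal{A}$ with $\rho(u)=e^{-\pi i c}v$, $\rho(v)=e^{\pi i c}u$, $\rho(Z)=Z^{-1}$ (it exists since $P$ is real on $S^1$; $\rho^2=g_t$). A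 $g_t$-twisted trace $T$ is positive if the sesquilinear form $(a,b)_T=T(a\rho(b))$ is positive definite. For a Laurent polynomial $R$, $\overline{R}$ is obtained by conjugating coefficients. *)

theory Defs
  imports Complex_Main
begin

text \<open>An algebra over the complex numbers is rendered as a
  ring 'a together with a central unital ring embedding emb of the complex numbers.
  The algebra A_P (defined by generators and relations) is characterised up to
  isomorphism by the relations together with the standard (PBW-type) basis
  u^i Z^k (i >= 0), v^(-i) Z^k (i < 0), k integer.\<close>

definition zpow :: "'a::ring_1 \<Rightarrow> 'a \<Rightarrow> int \<Rightarrow> 'a" where
  "zpow X Xi k = (if 0 \<le> k then X ^ nat k else Xi ^ nat (- k))"

text \<open>Laurent polynomial with coefficient function r (finite support), evaluated
  at an invertible element X with inverse Xi.\<close>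
definition lp :: "(complex \<Rightarrow> 'a::ring_1) \<Rightarrow> (int \<Rightarrow> complex) \<Rightarrow> 'a \<Rightarrow> 'a \<Rightarrow> 'a" where
  "lp emb r X Xi = (\<Sum>k\<in>{k. r k \<noteq> 0}. emb (r k) * zpow X Xi k)"

definition Pev :: "(int \<Rightarrow> complex) \<Rightarrow> complex \<Rightarrow> complex" where
  "Pev p z = (\<Sum>k\<in>{k. p k \<noteq> 0}. p k * z powi k)"

definition gwa_mon :: "'a::ring_1 \<Rightarrow> 'a \<Rightarrow> 'a \<Rightarrow> 'a \<Rightarrow> int \<Rightarrow> int \<Rightarrow> 'a" where
  "gwa_mon u v Z Zi i k = (if 0 \<le> i then u ^ nat i else v ^ nat (- i)) * zpow Z Zi k"

definition is_A_P :: "real \<Rightarrow> (int \<Rightarrow> complex) \<Rightarrow> (complex \<Rightarrow> 'a::ring_1) \<Rightarrow> 'a \<Rightarrow> 'a \<Rightarrow> 'a \<Rightarrow> 'a \<Rightarrow> bool" where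
  "is_A_P q p emb u v Z Zi \<longleftrightarrow>
     (\<forall>x y. emb (x + y) = emb x + emb y) \<and> (\<forall>x y. emb (x * y) = emb x * emb y) \<and>
     emb 1 = 1 \<and> (\<forall>x a. emb x * a = a * emb x) \<and>
     Z * Zi = 1 \<and> Zi * Z = 1 \<and>
     Z * u * Zi = emb (complex_of_real (q ^ 2)) * u \<and>
     Z * v * Zi = emb (complex_of_real (inverse q ^ 2)) * v \<and>
     u * v = lp emb p (emb (complex_of_real (inverse q)) * Z) (emb (complex_of_real q) * Zi) \<and>
     v * u = lp emb p (emb (complex_of_real q) * Z) (emb (complex_of_real (inverse q)) * Zi) \<and>
     (\<forall>a. \<exists>cf. finite {pk. cf pk \<noteq> 0} \<and>
        a = (\<Sum>pk\<in>{pk. cf pk \<noteq> 0}. emb (cf pk) * gwa_mon u v Z Zi (fst pk) (snd pk))) \<and>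
     (\<forall>cf. finite {pk. cf pk \<noteq> 0} \<and>
        (\<Sum>pk\<in>{pk. cf pk \<noteq> 0}. emb (cf pk) * gwa_mon u v Z Zi (fst pk) (snd pk)) = 0
        \<longrightarrow> (\<forall>pk. cf pk = 0))"

definition Adeg :: "real \<Rightarrow> (complex \<Rightarrow> 'a::ring_1) \<Rightarrow> 'a \<Rightarrow> 'a \<Rightarrow> int \<Rightarrow> 'a set" where
  "Adeg q emb Z Zi i = {a. Z * a * Zi = emb (complex_of_real q powi (2 * i)) * a}"

definition is_g :: "(complex \<Rightarrow> 'a::ring_1) \<Rightarrow> 'a \<Rightarrow> 'a \<Rightarrow> 'a \<Rightarrow> 'a \<Rightarrow> complex \<Rightarrow> ('a \<Rightarrow> 'a) \<Rightarrow> bool" where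
  "is_g emb u v Z Zi t g \<longleftrightarrow>
     (\<forall>a b. g (a + b) = g a + g b) \<and> (\<forall>a b. g (a * b) = g a * g b) \<and>
     (\<forall>x a. g (emb x * a) = emb x * g a) \<and>
     g u = emb t * u \<and> g v = emb (inverse t) * v \<and> g Z = Z \<and> g Zi = Zi"

definition is_rho :: "(complex \<Rightarrow> 'a::ring_1) \<Rightarrow> 'a \<Rightarrow> 'a \<Rightarrow> 'a \<Rightarrow> 'a \<Rightarrow> real \<Rightarrow> ('a \<Rightarrow> 'a) \<Rightarrow> bool" where
  "is_rho emb u v Z Zi c \<rho> \<longleftrightarrow>
     (\<forall>a b. \<rho> (a + b) = \<rho> a + \<rho> b) \<and> (\<forall>a b. \<rho> (a * b) = \<rho> a * \<rho> b) \<and>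
     (\<forall>x a. \<rho> (emb x * a) = emb (cnj x) * \<rho> a) \<and>
     \<rho> u = emb (exp (- (complex_of_real pi * \<i> * complex_of_real c))) * v \<and>
     \<rho> v = emb (exp (complex_of_real pi * \<i> * complex_of_real c)) * u \<and>
     \<rho> Z = Zi \<and> \<rho> Zi = Z"

definition twisted_trace :: "(complex \<Rightarrow> 'a::ring_1) \<Rightarrow> ('a \<Rightarrow> 'a) \<Rightarrow> ('a \<Rightarrow> complex) \<Rightarrow> bool" where
  "twisted_trace emb g T \<longleftrightarrow>
     (\<forall>a b. T (a + b) = T a + T b) \<and> (\<forall>x a. T (emb x * a) = x * T a) \<and>
     (\<forall>a b. T (a * b) = T (b * g a))"

definition cpos :: "complex \<Rightarrow> bool" where
  "cpos x \<longleftrightarrow> x \<in> \<real> \<and> 0 < Re x"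

definition positive_trace :: "('a::ring_1 \<Rightarrow> 'a) \<Rightarrow> ('a \<Rightarrow> complex) \<Rightarrow> bool" where
  "positive_trace \<rho> T \<longleftrightarrow> (\<forall>a. a \<noteq> 0 \<longrightarrow> cpos (T (a * \<rho> a)))"

end

theory Submission
  imports Defs
begin

text \<open>Conjugation by Z grades the algebra: it acts on A_d by the scalar q^(2d), which differs
  from 1 for d \<noteq> 0 and is fixed by g_t, so a twisted trace vanishes on A_d for d \<noteq> 0 and
  the form T(a \<rho>(b)) is block-diagonal with respect to the grading. On the blocks, the twisted
  trace property gives T(ub \<rho>(ub)) = T(bv \<rho>(bv)) and T(vb \<rho>(vb)) = T(bu \<rho>(bu)); since every
  nonzero element of degree d \<ge> 2 (resp. d < 0) has the form ub (resp. vb) with bv (resp. bu)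
  nonzero of degree d - 2 (resp. d + 2) (compare top coefficients in Z, using P \<noteq> 0, which
  itself follows from positivity on A_1), positivity propagates from A_0 and A_1 to all degrees.
  Finally A_0 consists of the R(Z) and A_1 of the u R(qZ), and computing \<rho> on these gives (iii).\<close>

lemma zpow_0 [simp]: "zpow X Xi 0 = 1"
  by (simp add: zpow_def)

lemma zpow_times_base:
  fixes X Xi :: "'a::ring_1"
  assumes "X * Xi = 1" "Xi * X = 1"
  shows "zpow X Xi k * X = zpow X Xi (k + 1)"
proof (cases "0 \<le> k")
  case True
  then show ?thesis by (simp add: zpow_def nat_add_distrib power_Suc2[symmetric])
next
  case False
  then obtain n where n: "nat (- k) = Suc n"
    by (metis gr0_implies_Suc zero_less_nat_eq neg_0_less_iff_less not_le)
  have "nat (- (k + 1)) = n" using n by linarith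
  moreover have "Xi ^ Suc n * X = Xi ^ n" by (simp only: power_Suc2 mult.assoc assms mult_1_right)
  ultimately show ?thesis using False n by (auto simp: zpow_def)
qed

lemma zpow_times_inverse_base:
  fixes X Xi :: "'a::ring_1"
  assumes "X * Xi = 1" "Xi * X = 1"
  shows "zpow X Xi k * Xi = zpow X Xi (k - 1)"
proof (cases "0 < k")
  case False
  then show ?thesis by (simp add: zpow_def nat_add_distrib power_Suc2[symmetric] Suc_nat_eq_nat_zadd1)
next
  case True
  then obtain n where n: "nat k = Suc n" by (metis gr0_implies_Suc zero_less_nat_eq)
  have "nat (k - 1) = n" using n by linarith
  moreover have "X ^ Suc n * Xi = X ^ n" by (simp only: power_Suc2 mult.assoc assms mult_1_right)
  ultimately show ?thesis using True n by (auto simp: zpow_def)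
qed

lemma zpow_add:
  fixes X Xi :: "'a::ring_1"
  assumes "X * Xi = 1" "Xi * X = 1"
  shows "zpow X Xi k * zpow X Xi l = zpow X Xi (k + l)"
proof (induction l rule: int_induct[where k = 0])
  case base
  then show ?case by simp
next
  case (step1 i)
  have "zpow X Xi k * zpow X Xi (i + 1) = (zpow X Xi k * zpow X Xi i) * X"
    by (simp add: zpow_times_base[OF assms, symmetric] mult.assoc)
  also have "\<dots> = zpow X Xi (k + (i + 1))"
    using step1 zpow_times_base[OF assms, of "k + i"] by (simp add: add.assoc)
  finally show ?case .
next
  case (step2 i)
  have "zpow X Xi k * zpow X Xi (i - 1) = (zpow X Xi k * zpow X Xi i) * Xi"
    by (simp add: zpow_times_inverse_base[OF assms, symmetric] mult.assoc)
  also have "\<dots> = zpow X Xi (k + (i - 1))"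
    using step2 zpow_times_inverse_base[OF assms, of "k + i"] by (simp add: algebra_simps)
  finally show ?case .
qed

lemma power_commute_shift:
  fixes X w X' :: "'a::ring_1"
  assumes "X * w = w * X'"
  shows "X ^ n * w = w * X' ^ n"
proof (induction n)
  case 0
  then show ?case by simp
next
  case (Suc n)
  have "X ^ Suc n * w = X * (X ^ n * w)" by (simp add: mult.assoc)
  also have "\<dots> = (X * w) * X' ^ n" using Suc by (simp add: mult.assoc)
  also have "\<dots> = w * X' ^ Suc n" using assms by (simp add: mult.assoc)
  finally show ?case .
qed

lemma zpow_commute_shift:
  fixes X Xi w X' Xi' :: "'a::ring_1"
  assumes "X * w = w * X'" "Xi * w = w * Xi'"
  shows "zpow X Xi k * w = w * zpow X' Xi' k"
  using power_commute_shift[OF assms(1)] power_commute_shift[OF assms(2)] by (simp add: zpow_def)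

lemma support_nonempty_if_sum_nonzero: "(\<Sum>k\<in>{k. r k \<noteq> 0}. f k) \<noteq> 0 \<Longrightarrow> \<exists>k. r k \<noteq> 0"
  by (metis (mono_tags) Collect_empty_eq sum.empty)

lemma cpos_sum:
  assumes "finite D" "\<forall>d\<in>D. f d = 0 \<or> cpos (f d)" "d0 \<in> D" "cpos (f d0)"
  shows "cpos (sum f D)"
proof -
  have "\<forall>d\<in>D. f d \<in> \<real>" using assms(2) by (auto simp: cpos_def)
  then have "sum f D \<in> \<real>" by (simp add: sum_in_Reals)
  moreover have "Re (f d0) \<le> (\<Sum>d\<in>D. Re (f d))"
    by (rule member_le_sum) (use assms in \<open>auto simp: cpos_def\<close>)
  then have "0 < Re (sum f D)" using assms(4) by (simp add: cpos_def Re_sum)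
  ultimately show ?thesis by (simp add: cpos_def)
qed

locale gen_weyl_algebra =
  fixes q :: real and p :: "int \<Rightarrow> complex" and emb :: "complex \<Rightarrow> 'a::ring_1"
    and u v Z Zi :: 'a
  assumes q_pos: "0 < q" and q_less_1: "q < 1" and P_fin: "finite {k. p k \<noteq> 0}"
    and presents: "is_A_P q p emb u v Z Zi"
begin

abbreviation "mon \<equiv> gwa_mon u v Z Zi"
abbreviation "grade \<equiv> Adeg q emb Z Zi"
abbreviation "zp \<equiv> zpow Z Zi"
abbreviation "sZ s \<equiv> emb (complex_of_real s) * Z"
abbreviation "sZi s \<equiv> emb (complex_of_real s) * Zi"

lemma emb_add: "emb (x + y) = emb x + emb y"
  using presents unfolding is_A_P_def by blast
lemma emb_mult: "emb (x * y) = emb x * emb y"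
  using presents unfolding is_A_P_def by blast
lemma emb_1 [simp]: "emb 1 = 1"
  using presents unfolding is_A_P_def by blast
lemma emb_commute: "emb x * a = a * emb x"
  using presents unfolding is_A_P_def by blast
lemma Z_Zi [simp]: "Z * Zi = 1"
  using presents unfolding is_A_P_def by blast
lemma Zi_Z [simp]: "Zi * Z = 1"
  using presents unfolding is_A_P_def by blast
lemma Z_u_Zi: "Z * u * Zi = emb (complex_of_real (q ^ 2)) * u"
  using presents unfolding is_A_P_def by blast
lemma Z_v_Zi: "Z * v * Zi = emb (complex_of_real (inverse q ^ 2)) * v"
  using presents unfolding is_A_P_def by blast
lemma u_v: "u * v = lp emb p (sZ (inverse q)) (sZi q)"
  using presents unfolding is_A_P_def by blast
lemma v_u: "v * u = lp emb p (sZ q) (sZi (inverse q))"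
  using presents unfolding is_A_P_def by blast
lemma mon_span:
  obtains cf where "finite {pk. cf pk \<noteq> 0}"
    "a = (\<Sum>pk\<in>{pk. cf pk \<noteq> 0}. emb (cf pk) * mon (fst pk) (snd pk))"
  using presents unfolding is_A_P_def by blast

lemma emb_0 [simp]: "emb 0 = 0"
  using emb_add[of 0 0] by simp

lemma mon_independent:
  assumes "finite S" "(\<Sum>pk\<in>S. emb (c pk) * mon (fst pk) (snd pk)) = 0" "pk \<in> S"
  shows "c pk = 0"
proof -
  define cf where "cf pk = (if pk \<in> S then c pk else 0)" for pk
  have sub: "{pk. cf pk \<noteq> 0} \<subseteq> S" by (auto simp: cf_def split: if_splits)
  have "(\<Sum>pk\<in>{pk. cf pk \<noteq> 0}. emb (cf pk) * mon (fst pk) (snd pk))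
      = (\<Sum>pk\<in>S. emb (cf pk) * mon (fst pk) (snd pk))"
    by (rule sum.mono_neutral_left[OF assms(1) sub]) auto
  also have "\<dots> = 0" using assms(2) by (simp add: cf_def)
  finally have "cf pk = 0"
    using presents finite_subset[OF sub assms(1)] unfolding is_A_P_def by blast
  then show ?thesis using assms(3) by (simp add: cf_def)
qed

lemma emb_diff: "emb (x - y) = emb x - emb y"
  using emb_add[of "x - y" y] by (simp add: eq_diff_eq)
lemma emb_sum: "emb (sum f S) = (\<Sum>x\<in>S. emb (f x))"
  by (induction S rule: infinite_finite_induct) (auto simp: emb_add)
lemma emb_left_commute: "a * (emb x * b) = emb x * (a * b)"
  by (metis mult.assoc emb_commute)
lemma emb_emb_mult [simp]: "emb x * (emb y * b) = emb (x * y) * b"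
  by (simp add: emb_mult mult.assoc)
lemma emb_emb [simp]: "emb x * emb y = emb (x * y)"
  by (simp add: emb_mult)
lemma emb_power_mult: "(emb a * X) ^ n = emb (a ^ n) * X ^ n"
  by (induction n) (simp_all add: emb_left_commute[of X] mult.assoc)

lemmas emb_left_commute_gens =
  emb_left_commute[of u] emb_left_commute[of v] emb_left_commute[of Z] emb_left_commute[of Zi]

lemma zpow_scale:
  assumes "a \<noteq> 0"
  shows "zpow (emb a * X) (emb (inverse a) * Xi) k = emb (a powi k) * zpow X Xi k"
  by (simp add: zpow_def emb_power_mult power_int_def)

lemma zp_add: "zp k * zp l = zp (k + l)"
  by (rule zpow_add) simp_all

lemma lp_scale:
  assumes "a \<noteq> 0"
  shows "lp emb r (emb a * Z) (emb (inverse a) * Zi) = (\<Sum>k\<in>{k. r k \<noteq> 0}. emb (r k * a powi k) * zp k)"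
  unfolding lp_def by (rule sum.cong[OF refl]) (simp add: zpow_scale[OF assms])

lemma lp_commute_shift:
  assumes "X * w = w * X'" "Xi * w = w * Xi'"
  shows "lp emb r X Xi * w = w * lp emb r X' Xi'"
  unfolding lp_def sum_distrib_right sum_distrib_left
  by (rule sum.cong[OF refl]) (simp add: mult.assoc zpow_commute_shift[OF assms] emb_left_commute)

lemma Z_u: "Z * u = u * sZ (q ^ 2)"
proof -
  have "Z * u = (Z * u * Zi) * Z" by (simp add: mult.assoc)
  also have "\<dots> = emb (complex_of_real (q ^ 2)) * u * Z" by (simp only: Z_u_Zi)
  finally show ?thesis by (simp add: emb_left_commute_gens mult.assoc)
qed

lemma Z_v: "Z * v = v * sZ (inverse q ^ 2)"
proof -
  have "Z * v = (Z * v * Zi) * Z" by (simp add: mult.assoc)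
  also have "\<dots> = emb (complex_of_real (inverse q ^ 2)) * v * Z" by (simp only: Z_v_Zi)
  finally show ?thesis by (simp add: emb_left_commute_gens mult.assoc)
qed

lemma Zi_u: "Zi * u = u * sZi (inverse q ^ 2)"
proof -
  have "u * Zi = Zi * (Z * u) * Zi" by (simp flip: mult.assoc)
  also have "\<dots> = emb (complex_of_real (q ^ 2)) * (Zi * u)"
    by (simp add: Z_u emb_left_commute_gens mult.assoc)
  finally have "emb (complex_of_real (inverse q ^ 2)) * (u * Zi) = Zi * u"
    using q_pos by (simp add: power_inverse)
  then show ?thesis by (simp add: emb_left_commute_gens)
qed

lemma Zi_v: "Zi * v = v * sZi (q ^ 2)"
proof -
  have "v * Zi = Zi * (Z * v) * Zi" by (simp flip: mult.assoc)
  also have "\<dots> = emb (complex_of_real (inverse q ^ 2)) * (Zi * v)"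
    by (simp add: Z_v emb_left_commute_gens mult.assoc)
  finally have "emb (complex_of_real (q ^ 2)) * (v * Zi) = Zi * v"
    using q_pos by (simp add: power_inverse)
  then show ?thesis by (simp add: emb_left_commute_gens)
qed

lemma zp_u: "zp k * u = emb (complex_of_real (q ^ 2) powi k) * (u * zp k)"
proof -
  have "zp k * u = u * zpow (sZ (q ^ 2)) (emb (inverse (complex_of_real (q ^ 2))) * Zi) k"
    by (rule zpow_commute_shift) (use Z_u Zi_u q_pos in \<open>simp_all add: power_inverse\<close>)
  then show ?thesis using q_pos by (simp add: zpow_scale emb_left_commute_gens)
qed

lemma zp_v: "zp k * v = emb (complex_of_real (inverse q ^ 2) powi k) * (v * zp k)"
proof -
  have "zp k * v = v * zpow (sZ (inverse q ^ 2)) (emb (inverse (complex_of_real (inverse q ^ 2))) * Zi) k"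
    by (rule zpow_commute_shift) (use Z_v Zi_v q_pos in \<open>simp_all add: power_inverse\<close>)
  then show ?thesis using q_pos by (simp add: zpow_scale emb_left_commute_gens)
qed

lemma u_v_expansion:
  "u * v = (\<Sum>j\<in>{j. p j \<noteq> 0}. emb (p j * complex_of_real (inverse q) powi j) * zp j)"
  using u_v lp_scale[of "complex_of_real (inverse q)" p] q_pos by simp

lemma v_u_expansion:
  "v * u = (\<Sum>j\<in>{j. p j \<noteq> 0}. emb (p j * complex_of_real q powi j) * zp j)"
  using v_u lp_scale[of "complex_of_real q" p] q_pos by simp

lemma lp_q_times_v: "lp emb r (sZ q) (sZi (inverse q)) * v = v * lp emb r (sZ (inverse q)) (sZi q)"
proof (rule lp_commute_shift)
  have "complex_of_real q * complex_of_real (inverse q ^ 2) = complex_of_real (inverse q)"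
    "complex_of_real (inverse q) * complex_of_real (q ^ 2) = complex_of_real q"
    using q_pos by (simp_all add: power2_eq_square field_simps)
  then show "sZ q * v = v * sZ (inverse q)" "sZi (inverse q) * v = v * sZi q"
    by (simp_all only: mult.assoc Z_v Zi_v emb_left_commute_gens emb_emb_mult)
qed

subsection \<open>The grading\<close>

definition eig :: "int \<Rightarrow> complex" where
  "eig d = complex_of_real q powi (2 * d)"

lemma eig_add: "eig (i + j) = eig i * eig j"
  using q_pos by (simp add: eig_def distrib_left power_int_add)

lemma eig_inj: "eig i = eig d \<Longrightarrow> i = d"
proof (rule ccontr)
  assume eq: "eig i = eig d" and "i \<noteq> d"
  then have "q powi (2 * i) \<noteq> q powi (2 * d)"
    using power_int_strict_decreasing[OF _ q_pos q_less_1] by (metis linorder_neq_iff mult_less_cancel_left_pos zero_less_numeral)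
  with eq show False by (simp add: eig_def flip: of_real_power_int)
qed

lemma grade_iff: "x \<in> grade d \<longleftrightarrow> Z * x * Zi = emb (eig d) * x"
  by (simp add: Adeg_def eig_def)

lemma grade_add: "x \<in> grade d \<Longrightarrow> y \<in> grade d \<Longrightarrow> x + y \<in> grade d"
  by (simp add: grade_iff distrib_left distrib_right emb_add)

lemma grade_sum: "(\<And>i. i \<in> S \<Longrightarrow> f i \<in> grade d) \<Longrightarrow> sum f S \<in> grade d"
  by (induction S rule: infinite_finite_induct) (simp_all add: grade_iff[of 0] grade_add)

lemma grade_emb_mult: "x \<in> grade d \<Longrightarrow> emb a * x \<in> grade d"
  by (simp add: grade_iff mult.assoc emb_left_commute_gens mult.commute)

lemma grade_mult:
  assumes "x \<in> grade i" "y \<in> grade j"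
  shows "x * y \<in> grade (i + j)"
proof -
  have "Z * (x * y) * Zi = (Z * x * Zi) * (Z * y * Zi)"
    by (simp add: mult.assoc flip: mult.assoc[of Zi Z])
  also have "\<dots> = emb (eig (i + j)) * (x * y)"
    using assms by (simp add: grade_iff emb_left_commute[of x] mult.assoc eig_add)
  finally show ?thesis by (simp add: grade_iff mult.assoc)
qed

lemma grade_power: "x \<in> grade d \<Longrightarrow> x ^ n \<in> grade (int n * d)"
proof (induction n)
  case 0
  then show ?case by (simp add: grade_iff eig_def)
next
  case (Suc n)
  then have "x * x ^ n \<in> grade (d + int n * d)" by (intro grade_mult) auto
  then show ?case by (simp add: algebra_simps)
qed

lemma mon_grade: "mon i k \<in> grade i"
proof -
  have u: "u \<in> grade 1" using Z_u_Zi by (simp add: grade_iff eig_def)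
  have v: "v \<in> grade (- 1)" using Z_v_Zi by (simp add: grade_iff eig_def power_inverse power_int_def)
  have "Z \<in> grade 0" by (simp add: grade_iff eig_def mult.assoc)
  moreover have "Zi \<in> grade 0" by (simp add: grade_iff eig_def flip: mult.assoc)
  ultimately have zp: "zp k \<in> grade 0"
    using grade_power[of Z 0] grade_power[of Zi 0] by (simp add: zpow_def)
  show ?thesis
  proof (cases "0 \<le> i")
    case True
    then show ?thesis using grade_mult[OF grade_power[OF u] zp, of "nat i"] by (simp add: gwa_mon_def)
  next
    case False
    then show ?thesis using grade_mult[OF grade_power[OF v] zp, of "nat (- i)"] by (simp add: gwa_mon_def)
  qed
qed

lemma grade_mon_sum: "(\<Sum>k\<in>K. emb (a k) * mon i (f k)) \<in> grade i"
  by (rule grade_sum) (rule grade_emb_mult[OF mon_grade])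

lemma Z_conj_mon_sum:
  "Z * (\<Sum>pk\<in>S. emb (c pk) * mon (fst pk) (snd pk)) * Zi
   = (\<Sum>pk\<in>S. emb (c pk * eig (fst pk)) * mon (fst pk) (snd pk))"
proof -
  have "Z * (emb a * mon i k) * Zi = emb (a * eig i) * mon i k" for a i k
  proof -
    have "Z * (emb a * mon i k) * Zi = emb a * (Z * mon i k * Zi)"
      by (simp add: emb_left_commute[of Z] mult.assoc)
    then show ?thesis using mon_grade[of i k] by (simp add: grade_iff)
  qed
  then show ?thesis by (simp add: sum_distrib_left sum_distrib_right)
qed

lemma mon_expansion_in_row:
  assumes "x \<in> grade d" "finite S" "x = (\<Sum>pk\<in>S. emb (c pk) * mon (fst pk) (snd pk))"
    and "pk \<in> S" "c pk \<noteq> 0"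
  shows "fst pk = d"
proof -
  have "(\<Sum>pk\<in>S. emb (c pk * eig (fst pk)) * mon (fst pk) (snd pk))
      = (\<Sum>pk\<in>S. emb (eig d * c pk) * mon (fst pk) (snd pk))"
    using assms(1) unfolding assms(3) grade_iff Z_conj_mon_sum by (simp add: sum_distrib_left)
  then have "(\<Sum>pk\<in>S. emb (c pk * (eig (fst pk) - eig d)) * mon (fst pk) (snd pk)) = 0"
    by (simp add: algebra_simps emb_diff sum_subtractf)
  then have "c pk * (eig (fst pk) - eig d) = 0"
    by (rule mon_independent[OF assms(2) _ assms(4)])
  then show ?thesis using assms(5) eig_inj by simp
qed

lemma grade_mon_expansion:
  assumes "x \<in> grade d"
  obtains r where "finite {k. r k \<noteq> 0}" "x = (\<Sum>k\<in>{k. r k \<noteq> 0}. emb (r k) * mon d k)"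
proof -
  obtain cf where fin: "finite {pk. cf pk \<noteq> 0}"
    and x: "x = (\<Sum>pk\<in>{pk. cf pk \<noteq> 0}. emb (cf pk) * mon (fst pk) (snd pk))"
    using mon_span by blast
  define r where "r k = cf (d, k)" for k
  have row: "cf pk \<noteq> 0 \<Longrightarrow> fst pk = d" for pk
    using mon_expansion_in_row[OF assms fin x] by simp
  have S: "{pk. cf pk \<noteq> 0} = Pair d ` {k. r k \<noteq> 0}"
  proof (intro set_eqI iffI)
    fix pk assume "pk \<in> {pk. cf pk \<noteq> 0}"
    then show "pk \<in> Pair d ` {k. r k \<noteq> 0}" using row[of pk] by (cases pk) (auto simp: r_def)
  qed (auto simp: r_def)
  have "finite {k. r k \<noteq> 0}" using fin unfolding S by (rule finite_imageD) (simp add: inj_on_def)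
  moreover have "x = (\<Sum>k\<in>{k. r k \<noteq> 0}. emb (r k) * mon d k)"
    unfolding x S by (subst sum.reindex) (simp_all add: inj_on_def r_def)
  ultimately show thesis by (rule that)
qed

lemma grade_decomposition:
  obtains D xd where "finite D" "\<And>d. xd d \<in> grade d" "a = (\<Sum>d\<in>D. xd d)"
proof -
  obtain cf where fin: "finite {pk. cf pk \<noteq> 0}"
    and a: "a = (\<Sum>pk\<in>{pk. cf pk \<noteq> 0}. emb (cf pk) * mon (fst pk) (snd pk))"
    using mon_span by blast
  let ?S = "{pk. cf pk \<noteq> 0}"
  define xd where "xd d = (\<Sum>pk\<in>{pk \<in> ?S. fst pk = d}. emb (cf pk) * mon (fst pk) (snd pk))" for d
  have "a = (\<Sum>d\<in>fst ` ?S. xd d)"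
    unfolding a xd_def by (rule sum.group[symmetric]) (use fin in auto)
  moreover have "xd d \<in> grade d" for d
    unfolding xd_def by (rule grade_sum) (auto intro: grade_emb_mult mon_grade)
  ultimately show thesis using that fin by blast
qed

subsection \<open>Leading terms\<close>

lemma mon_sum_nonzero:
  assumes "finite J" "j0 \<in> J" "\<forall>j\<in>J. f j = f j0 \<longrightarrow> j = j0" "a j0 \<noteq> 0"
  shows "(\<Sum>j\<in>J. emb (a j) * mon (fst (f j)) (snd (f j))) \<noteq> 0"
proof
  assume zero: "(\<Sum>j\<in>J. emb (a j) * mon (fst (f j)) (snd (f j))) = 0"
  have group: "(\<Sum>j\<in>J. emb (a j) * mon (fst (f j)) (snd (f j)))
      = (\<Sum>pk\<in>f ` J. emb (\<Sum>j\<in>{j\<in>J. f j = pk}. a j) * mon (fst pk) (snd pk))"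
    unfolding emb_sum sum_distrib_right using assms(1)
    by (subst sum.group[symmetric, where g = f]) (auto intro!: sum.cong)
  have "(\<Sum>j\<in>{j\<in>J. f j = f j0}. a j) = 0"
    using mon_independent[of "f ` J" "\<lambda>pk. \<Sum>j\<in>{j\<in>J. f j = pk}. a j" "f j0"] zero group assms(1,2)
    by simp
  moreover have "{j\<in>J. f j = f j0} = {j0}" using assms(2,3) by auto
  ultimately show False using assms(4) by simp
qed

lemma u_nonzero: "u \<noteq> 0"
proof
  assume "u = 0"
  then have "(\<Sum>pk\<in>{(1, 0)}. emb 1 * mon (fst pk) (snd pk)) = 0" by (simp add: gwa_mon_def)
  then show False using mon_independent[of "{(1, 0)}" "\<lambda>_. 1" "(1, 0)"] by simp
qed

lemma lp_mon_sum_nonzero: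
  assumes "finite {k. r k \<noteq> 0}" "\<exists>k. r k \<noteq> 0"
  shows "(\<Sum>k\<in>{k. r k \<noteq> 0}. emb (r k) * mon i k) \<noteq> 0"
proof -
  obtain k0 where "r k0 \<noteq> 0" using assms(2) by blast
  then show ?thesis using mon_sum_nonzero[of "{k. r k \<noteq> 0}" k0 "Pair i" r] assms(1) by auto
qed

lemma mon_sum_product_nonzero:
  assumes "finite J" "finite K" "J \<noteq> {}" "K \<noteq> {}" "\<forall>j\<in>J. a j \<noteq> 0" "\<forall>k\<in>K. b k \<noteq> 0"
  shows "(\<Sum>jk\<in>J \<times> K. emb (a (fst jk) * b (snd jk)) * mon i (fst jk + snd jk)) \<noteq> 0"
proof -
  let ?top = "(Max J, Max K)"
  have top: "?top \<in> J \<times> K" using assms by simp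
  have "\<forall>jk\<in>J \<times> K. (i, fst jk + snd jk) = (i, fst ?top + snd ?top) \<longrightarrow> jk = ?top"
  proof (intro ballI impI)
    fix jk assume jk: "jk \<in> J \<times> K" and "(i, fst jk + snd jk) = (i, fst ?top + snd ?top)"
    moreover have "fst jk \<le> Max J" "snd jk \<le> Max K" using jk assms by auto
    ultimately show "jk = ?top" by (auto simp: prod_eq_iff)
  qed
  then show ?thesis
    using mon_sum_nonzero[OF _ top, of "\<lambda>jk. (i, fst jk + snd jk)" "\<lambda>jk. a (fst jk) * b (snd jk)"] assms
    by simp
qed

lemma mon_sum_times_nonzero:
  assumes mult: "\<And>k. mon i k * w = (\<Sum>j\<in>J. emb (a j * \<beta> powi k) * mon i' (j + k))"
    and J: "finite J" "J \<noteq> {}" "\<forall>j\<in>J. a j \<noteq> 0" and "\<beta> \<noteq> 0"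
    and r: "finite {k. r k \<noteq> 0}" "\<exists>k. r k \<noteq> 0"
  shows "(\<Sum>k\<in>{k. r k \<noteq> 0}. emb (r k) * mon i k) * w \<in> grade i' - {0}"
proof -
  let ?K = "{k. r k \<noteq> 0}"
  have "(\<Sum>k\<in>?K. emb (r k) * mon i k) * w = (\<Sum>k\<in>?K. \<Sum>j\<in>J. emb (a j * (r k * \<beta> powi k)) * mon i' (j + k))"
    unfolding sum_distrib_right
    by (intro sum.cong) (simp_all add: mult.assoc mult sum_distrib_left mult.commute mult.left_commute)
  also have "\<dots> = (\<Sum>jk\<in>J \<times> ?K. emb (a (fst jk) * (r (snd jk) * \<beta> powi (snd jk))) * mon i' (fst jk + snd jk))"
    by (subst sum.swap) (simp add: sum.cartesian_product case_prod_beta)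
  finally have eq: "(\<Sum>k\<in>?K. emb (r k) * mon i k) * w = \<dots>" .
  have K: "?K \<noteq> {}" "\<forall>k\<in>?K. r k * \<beta> powi k \<noteq> 0" using r(2) \<open>\<beta> \<noteq> 0\<close> by auto
  show ?thesis
    unfolding eq
    by (intro DiffI grade_mon_sum) (use mon_sum_product_nonzero[OF J(1) r(1) J(2) K(1) J(3) K(2)] in simp)
qed

subsection \<open>Moving between degrees\<close>

lemma mon_succ: "0 \<le> i \<Longrightarrow> mon (i + 1) k = u * mon i k"
  by (simp add: gwa_mon_def nat_add_distrib mult.assoc)

lemma mon_pred: "i \<le> 0 \<Longrightarrow> mon (i - 1) k = v * mon i k"
proof -
  assume "i \<le> 0"
  then have "nat (- (i - 1)) = Suc (nat (- i))" by simp
  with \<open>i \<le> 0\<close> show ?thesis by (cases "i = 0") (simp_all add: gwa_mon_def mult.assoc)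
qed

lemma mon_times_v:
  assumes "0 < i"
  shows "mon i k * v
    = (\<Sum>j\<in>{j. p j \<noteq> 0}. emb (p j * complex_of_real (inverse q) powi j * complex_of_real (inverse q ^ 2) powi k) * mon (i - 1) (j + k))"
proof -
  let ?c = "complex_of_real (inverse q ^ 2) powi k"
  have "nat i = Suc (nat (i - 1))" using assms by simp
  then have "mon i k * v = u ^ nat (i - 1) * u * (zp k * v)"
    using assms by (simp add: gwa_mon_def mult.assoc del: power_Suc add: power_Suc2)
  also have "\<dots> = emb ?c * (u ^ nat (i - 1) * (u * v) * zp k)"
    by (simp only: zp_v mult.assoc emb_left_commute[of "u ^ nat (i - 1)"] emb_left_commute[of u])
  also have "\<dots> = (\<Sum>j\<in>{j. p j \<noteq> 0}. emb (p j * complex_of_real (inverse q) powi j * ?c) * mon (i - 1) (j + k))"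
    using assms
    by (simp add: u_v_expansion sum_distrib_left sum_distrib_right gwa_mon_def mult.assoc zp_add
        emb_left_commute[where a = "u ^ n" for n] mult.commute)
  finally show ?thesis .
qed

lemma mon_times_u:
  assumes "i < 0"
  shows "mon i k * u
    = (\<Sum>j\<in>{j. p j \<noteq> 0}. emb (p j * complex_of_real q powi j * complex_of_real (q ^ 2) powi k) * mon (i + 1) (j + k))"
proof -
  let ?c = "complex_of_real (q ^ 2) powi k"
  have "nat (- i) = Suc (nat (- (i + 1)))" using assms by simp
  then have "mon i k * u = v ^ nat (- (i + 1)) * v * (zp k * u)"
    using assms by (simp add: gwa_mon_def mult.assoc del: power_Suc add: power_Suc2)
  also have "\<dots> = emb ?c * (v ^ nat (- (i + 1)) * (v * u) * zp k)"
    by (simp only: zp_u mult.assoc emb_left_commute[of "v ^ nat (- (i + 1))"] emb_left_commute[of v])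
  also have "\<dots> = (\<Sum>j\<in>{j. p j \<noteq> 0}. emb (p j * complex_of_real q powi j * ?c) * mon (i + 1) (j + k))"
    using assms
    by (cases "i = -1") (simp_all add: v_u_expansion sum_distrib_left sum_distrib_right gwa_mon_def mult.assoc zp_add
        emb_left_commute[where a = "v ^ n" for n] mult.commute)
  finally show ?thesis .
qed

lemma grade_descent:
  assumes x: "x \<in> grade d" "x \<noteq> 0" and d: "2 \<le> d" and P: "{j. p j \<noteq> 0} \<noteq> {}"
  obtains b where "x = u * b" "b * v \<in> grade (d - 2) - {0}"
proof -
  obtain r where r: "finite {k. r k \<noteq> 0}" and xr: "x = (\<Sum>k\<in>{k. r k \<noteq> 0}. emb (r k) * mon d k)"
    using grade_mon_expansion[OF x(1)] by blast
  have "\<exists>k. r k \<noteq> 0" using x(2) unfolding xr by (rule support_nonempty_if_sum_nonzero)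
  let ?b = "\<Sum>k\<in>{k. r k \<noteq> 0}. emb (r k) * mon (d - 1) k"
  have "x = u * ?b"
    unfolding xr sum_distrib_left using mon_succ[of "d - 1"] d
    by (intro sum.cong) (simp_all add: emb_left_commute)
  moreover have "?b * v \<in> grade (d - 2) - {0}"
    by (rule mon_sum_times_nonzero[where a = "\<lambda>j. p j * complex_of_real (inverse q) powi j"
          and \<beta> = "complex_of_real (inverse q ^ 2)", OF _ _ P])
      (use mon_times_v[of "d - 1"] d P_fin q_pos r \<open>\<exists>k. r k \<noteq> 0\<close> in auto)
  ultimately show thesis by (rule that)
qed

lemma grade_ascent:
  assumes x: "x \<in> grade d" "x \<noteq> 0" and d: "d < 0" and P: "{j. p j \<noteq> 0} \<noteq> {}"
  obtains b where "x = v * b" "b * u \<in> grade (d + 2) - {0}"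
proof -
  obtain r where r: "finite {k. r k \<noteq> 0}" and xr: "x = (\<Sum>k\<in>{k. r k \<noteq> 0}. emb (r k) * mon d k)"
    using grade_mon_expansion[OF x(1)] by blast
  have rnz: "\<exists>k. r k \<noteq> 0" using x(2) unfolding xr by (rule support_nonempty_if_sum_nonzero)
  let ?b = "\<Sum>k\<in>{k. r k \<noteq> 0}. emb (r k) * mon (d + 1) k"
  have "x = v * ?b"
    unfolding xr sum_distrib_left using mon_pred[of "d + 1"] d
    by (intro sum.cong) (simp_all add: emb_left_commute)
  moreover have "?b * u \<in> grade (d + 2) - {0}"
  proof (cases "d = -1")
    case True
    have "mon 0 k * u = (\<Sum>j\<in>{0}. emb (1 * complex_of_real (q ^ 2) powi k) * mon 1 (j + k))" for k
      by (simp add: gwa_mon_def zp_u)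
    then show ?thesis
      using mon_sum_times_nonzero[where i = 0 and w = u and J = "{0}" and a = "\<lambda>_. 1"] q_pos r rnz True by auto
  next
    case False
    then show ?thesis
      by (intro mon_sum_times_nonzero[where a = "\<lambda>j. p j * complex_of_real q powi j"
            and \<beta> = "complex_of_real (q ^ 2)", OF _ _ P])
        (use mon_times_u[of "d + 1"] d P_fin q_pos r rnz in \<open>auto simp: add.commute\<close>)
  qed
  ultimately show thesis by (rule that)
qed

end

locale gwa_trace = gen_weyl_algebra q p emb u v Z Zi
  for q :: real and p :: "int \<Rightarrow> complex" and emb :: "complex \<Rightarrow> 'a::ring_1"
    and u v Z Zi :: 'a +
  fixes c :: real and g \<rho> :: "'a \<Rightarrow> 'a" and T :: "'a \<Rightarrow> complex"
  assumes g: "is_g emb u v Z Zi (exp (2 * complex_of_real pi * \<i> * complex_of_real c)) g"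
    and rho: "is_rho emb u v Z Zi c \<rho>"
    and T: "twisted_trace emb g T"
begin

abbreviation "tw \<equiv> exp (2 * complex_of_real pi * \<i> * complex_of_real c)"
abbreviation "half_phase \<equiv> exp (complex_of_real pi * \<i> * complex_of_real c)"
abbreviation "half_phase_inv \<equiv> exp (- (complex_of_real pi * \<i> * complex_of_real c))"
abbreviation "form x \<equiv> T (x * \<rho> x)"

lemma T_add: "T (a + b) = T a + T b"
  using T unfolding twisted_trace_def by blast
lemma T_emb: "T (emb x * a) = x * T a"
  using T unfolding twisted_trace_def by blast
lemma T_twist: "T (a * b) = T (b * g a)"
  using T unfolding twisted_trace_def by blast
lemma T_zero [simp]: "T 0 = 0"
  using T_emb[of 0 0] by simp
lemma T_sum: "T (sum f S) = (\<Sum>x\<in>S. T (f x))"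
  by (induction S rule: infinite_finite_induct) (auto simp: T_add)

lemma g_u: "g u = emb tw * u"
  using g unfolding is_g_def by blast
lemma g_v: "g v = emb (inverse tw) * v"
  using g unfolding is_g_def by blast
lemma g_Z: "g Z = Z"
  using g unfolding is_g_def by blast

lemma rho_add: "\<rho> (a + b) = \<rho> a + \<rho> b"
  using rho unfolding is_rho_def by blast
lemma rho_mult: "\<rho> (a * b) = \<rho> a * \<rho> b"
  using rho unfolding is_rho_def by blast
lemma rho_emb: "\<rho> (emb x * a) = emb (cnj x) * \<rho> a"
  using rho unfolding is_rho_def by blast
lemma rho_u: "\<rho> u = emb half_phase_inv * v"
  using rho unfolding is_rho_def by blast
lemma rho_v: "\<rho> v = emb half_phase * u"
  using rho unfolding is_rho_def by blast
lemma rho_Z: "\<rho> Z = Zi"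
  using rho unfolding is_rho_def by blast
lemma rho_Zi: "\<rho> Zi = Z"
  using rho unfolding is_rho_def by blast
lemma rho_zero [simp]: "\<rho> 0 = 0"
  using rho_add[of 0 0] by simp
lemma rho_one [simp]: "\<rho> 1 = 1"
  using rho_mult[of Z Zi] by (simp add: rho_Z rho_Zi)
lemma rho_sum: "\<rho> (sum f S) = (\<Sum>x\<in>S. \<rho> (f x))"
  by (induction S rule: infinite_finite_induct) (auto simp: rho_add)
lemma rho_lp: "\<rho> (lp emb r X Xi) = lp emb (cnj \<circ> r) (\<rho> X) (\<rho> Xi)"
proof -
  have "\<rho> (x ^ n) = \<rho> x ^ n" for x n by (induction n) (simp_all add: rho_mult)
  then have "\<rho> (zpow X Xi k) = zpow (\<rho> X) (\<rho> Xi) k" for k by (simp add: zpow_def)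
  then show ?thesis by (simp add: lp_def rho_sum rho_emb)
qed

lemma form_u_mult: "form (u * b) = form (b * v)"
proof -
  let ?Y = "b * v * \<rho> b"
  have "form (u * b) = half_phase_inv * T (u * ?Y)"
    by (simp add: rho_mult rho_u mult.assoc emb_left_commute[of b] emb_left_commute_gens T_emb)
  also have "T (u * ?Y) = tw * T (?Y * u)"
    using T_twist[of u ?Y] by (simp add: g_u emb_left_commute[of ?Y] T_emb)
  also have "half_phase_inv * (tw * T (?Y * u)) = half_phase * T (?Y * u)"
    by (simp add: mult.assoc[symmetric] flip: exp_add) (simp add: algebra_simps)
  also have "\<dots> = form (b * v)"
    by (simp add: rho_mult rho_v mult.assoc emb_left_commute[of "\<rho> b"] emb_left_commute[of b] emb_left_commute_gens T_emb)
  finally show ?thesis .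
qed

lemma form_v_mult: "form (v * b) = form (b * u)"
proof -
  let ?Y = "b * u * \<rho> b"
  have "form (v * b) = half_phase * T (v * ?Y)"
    by (simp add: rho_mult rho_v mult.assoc emb_left_commute[of b] emb_left_commute_gens T_emb)
  also have "T (v * ?Y) = inverse tw * T (?Y * v)"
    using T_twist[of v ?Y] by (simp add: g_v emb_left_commute[of ?Y] T_emb)
  also have "half_phase * (inverse tw * T (?Y * v)) = half_phase_inv * T (?Y * v)"
    by (simp add: mult.assoc[symmetric] flip: exp_add exp_minus) (simp add: algebra_simps)
  also have "\<dots> = form (b * u)"
    by (simp add: rho_mult rho_u mult.assoc emb_left_commute[of "\<rho> b"] emb_left_commute[of b] emb_left_commute_gens T_emb)
  finally show ?thesis .
qed

lemma T_grade_vanish: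
  assumes "x \<in> grade d" "d \<noteq> 0"
  shows "T x = 0"
proof -
  have "T (Z * (x * Zi)) = T x"
    using T_twist[of Z "x * Zi"] by (simp add: g_Z mult.assoc)
  then have "(eig d - 1) * T x = 0"
    using assms(1) by (simp add: grade_iff mult.assoc T_emb algebra_simps)
  moreover have "eig d \<noteq> 1" using eig_inj[of d 0] assms(2) by (auto simp: eig_def)
  ultimately show ?thesis by simp
qed

lemma rho_grade:
  assumes "x \<in> grade d"
  shows "\<rho> x \<in> grade (- d)"
proof -
  have "x = Zi * (Z * x * Zi) * Z" by (simp add: mult.assoc flip: mult.assoc[of Zi Z])
  also have "\<dots> = emb (eig d) * (Zi * x * Z)"
    using assms by (simp add: grade_iff emb_left_commute_gens mult.assoc)
  finally have "\<rho> x = emb (cnj (eig d)) * (Z * \<rho> x * Zi)"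
    by (metis rho_emb rho_mult rho_Z rho_Zi)
  moreover have "cnj (eig d) * eig (- d) = 1"
    using eig_add[of d "- d"] by (simp add: eig_def)
  ultimately show ?thesis
    by (simp add: grade_iff) (metis emb_1 emb_emb_mult mult.commute mult_1_left)
qed

lemma form_grade_sum:
  assumes "finite D" "\<And>d. xd d \<in> grade d"
  shows "form (\<Sum>d\<in>D. xd d) = (\<Sum>d\<in>D. form (xd d))"
proof -
  have "T (xd d * \<rho> (xd e)) = 0" if "d \<noteq> e" for d e
    using T_grade_vanish[OF grade_mult[OF assms(2) rho_grade[OF assms(2)]]] that by simp
  then have diag: "(\<Sum>e\<in>D. T (xd d * \<rho> (xd e))) = form (xd d)" if "d \<in> D" for d
    using sum.remove[OF assms(1) that, of "\<lambda>e. T (xd d * \<rho> (xd e))"] by (simp add: sum.neutral)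
  have "form (\<Sum>d\<in>D. xd d) = (\<Sum>d\<in>D. \<Sum>e\<in>D. T (xd d * \<rho> (xd e)))"
    by (simp add: rho_sum sum_product T_sum)
  also have "\<dots> = (\<Sum>d\<in>D. form (xd d))" using diag by simp
  finally show ?thesis .
qed

lemma P_nonzero_if_low_positive:
  assumes "\<forall>a\<in>grade 0 \<union> grade 1. a \<noteq> 0 \<longrightarrow> cpos (form a)"
  shows "{j. p j \<noteq> 0} \<noteq> {}"
proof
  assume "{j. p j \<noteq> 0} = {}"
  then have "form u = 0" by (simp add: rho_u u_v_expansion emb_left_commute_gens T_emb)
  moreover have "u \<in> grade 1" using mon_grade[of 1 0] by (simp add: gwa_mon_def)
  ultimately show False using assms u_nonzero by (auto simp: cpos_def)
qed

lemma form_positive_on_grades: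
  assumes low: "\<forall>a\<in>grade 0 \<union> grade 1. a \<noteq> 0 \<longrightarrow> cpos (form a)"
  shows "x \<in> grade d \<Longrightarrow> x \<noteq> 0 \<Longrightarrow> cpos (form x)"
  \<comment> \<open>|2d - 1| measures the distance of d from {0, 1}; both reductions decrease it.\<close>
proof (induction "nat \<bar>2 * d - 1\<bar>" arbitrary: d x rule: less_induct)
  case less
  note P = P_nonzero_if_low_positive[OF low]
  consider "d = 0 \<or> d = 1" | "2 \<le> d" | "d < 0" by linarith
  then show ?case
  proof cases
    case 1
    then show ?thesis using low less.prems by blast
  next
    case 2
    obtain b where "x = u * b" "b * v \<in> grade (d - 2) - {0}"
      using grade_descent[OF less.prems 2 P] .
    then show ?thesis using less.hyps[of "d - 2"] 2 form_u_mult by auto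
  next
    case 3
    obtain b where "x = v * b" "b * u \<in> grade (d + 2) - {0}"
      using grade_ascent[OF less.prems 3 P] .
    then show ?thesis using less.hyps[of "d + 2"] 3 form_v_mult by auto
  qed
qed

lemma positive_trace_if_low_positive:
  assumes low: "\<forall>a\<in>grade 0 \<union> grade 1. a \<noteq> 0 \<longrightarrow> cpos (form a)"
  shows "positive_trace \<rho> T"
  unfolding positive_trace_def
proof (intro allI impI)
  fix a :: 'a assume "a \<noteq> 0"
  obtain D xd where D: "finite D" and xd: "\<And>d. xd d \<in> grade d" and a: "a = (\<Sum>d\<in>D. xd d)"
    using grade_decomposition by blast
  obtain d0 where "d0 \<in> D" "xd d0 \<noteq> 0" using \<open>a \<noteq> 0\<close> a by (metis sum.neutral)
  then show "cpos (form a)"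
    unfolding a form_grade_sum[OF D xd]
    by (intro cpos_sum[OF D]) (auto intro: form_positive_on_grades[OF low xd])
qed

subsection \<open>Degrees 0 and 1 as Laurent polynomials\<close>

lemma lp_Z_mon_sum: "lp emb r Z Zi = (\<Sum>k\<in>{k. r k \<noteq> 0}. emb (r k) * mon 0 k)"
  by (simp add: lp_def gwa_mon_def)

lemma u_lp_mon_sum:
  "u * lp emb r (sZ q) (sZi (inverse q)) = (\<Sum>k\<in>{k. r k \<noteq> 0}. emb (r k * complex_of_real q powi k) * mon 1 k)"
  using lp_scale[of "complex_of_real q" r] q_pos
  by (simp add: sum_distrib_left emb_left_commute_gens gwa_mon_def)

lemma grade0_nonzero_iff:
  "a \<in> grade 0 - {0} \<longleftrightarrow> (\<exists>r. finite {k. r k \<noteq> 0} \<and> (\<exists>k. r k \<noteq> 0) \<and> a = lp emb r Z Zi)"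
proof
  assume a: "a \<in> grade 0 - {0}"
  then obtain r where r: "finite {k. r k \<noteq> 0}" "a = (\<Sum>k\<in>{k. r k \<noteq> 0}. emb (r k) * mon 0 k)"
    using grade_mon_expansion by blast
  moreover have "\<exists>k. r k \<noteq> 0"
    using a unfolding r(2) by (auto intro: support_nonempty_if_sum_nonzero)
  ultimately show "\<exists>r. finite {k. r k \<noteq> 0} \<and> (\<exists>k. r k \<noteq> 0) \<and> a = lp emb r Z Zi"
    by (auto simp: lp_Z_mon_sum)
next
  assume "\<exists>r. finite {k. r k \<noteq> 0} \<and> (\<exists>k. r k \<noteq> 0) \<and> a = lp emb r Z Zi"
  then show "a \<in> grade 0 - {0}"
    using lp_mon_sum_nonzero grade_mon_sum by (auto simp: lp_Z_mon_sum)
qed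

lemma grade1_nonzero_iff:
  "a \<in> grade 1 - {0} \<longleftrightarrow> (\<exists>r. finite {k. r k \<noteq> 0} \<and> (\<exists>k. r k \<noteq> 0) \<and> a = u * lp emb r (sZ q) (sZi (inverse q)))"
proof
  assume a: "a \<in> grade 1 - {0}"
  then obtain s where s: "finite {k. s k \<noteq> 0}" "a = (\<Sum>k\<in>{k. s k \<noteq> 0}. emb (s k) * mon 1 k)"
    using grade_mon_expansion[of a 1] by blast
  define r where "r k = s k / complex_of_real q powi k" for k
  have supp: "{k. r k \<noteq> 0} = {k. s k \<noteq> 0}" using q_pos by (auto simp: r_def)
  have "a = u * lp emb r (sZ q) (sZi (inverse q))"
    unfolding u_lp_mon_sum supp s(2) using q_pos by (intro sum.cong) (simp_all add: r_def)
  moreover have "\<exists>k. r k \<noteq> 0"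
    using a unfolding s(2) supp[symmetric] by (auto intro: support_nonempty_if_sum_nonzero)
  ultimately show "\<exists>r. finite {k. r k \<noteq> 0} \<and> (\<exists>k. r k \<noteq> 0) \<and> a = u * lp emb r (sZ q) (sZi (inverse q))"
    using s(1) unfolding supp[symmetric] by blast
next
  assume "\<exists>r. finite {k. r k \<noteq> 0} \<and> (\<exists>k. r k \<noteq> 0) \<and> a = u * lp emb r (sZ q) (sZi (inverse q))"
  then obtain r where r: "finite {k. r k \<noteq> 0}" "\<exists>k. r k \<noteq> 0" and a: "a = u * lp emb r (sZ q) (sZi (inverse q))"
    by blast
  have supp: "{k. r k * complex_of_real q powi k \<noteq> 0} = {k. r k \<noteq> 0}" using q_pos by auto
  have a_eq: "a = (\<Sum>k\<in>{k. r k * complex_of_real q powi k \<noteq> 0}. emb (r k * complex_of_real q powi k) * mon 1 k)"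
    unfolding a u_lp_mon_sum supp ..
  have "(\<Sum>k\<in>{k. r k * complex_of_real q powi k \<noteq> 0}. emb (r k * complex_of_real q powi k) * mon 1 k) \<noteq> 0"
    by (rule lp_mon_sum_nonzero) (use r supp q_pos in auto)
  then show "a \<in> grade 1 - {0}" unfolding a_eq by (intro DiffI grade_mon_sum) simp
qed

lemma form_u_lp:
  "form (u * lp emb r (sZ q) (sZi (inverse q)))
   = half_phase_inv * T (lp emb p (sZ (inverse q)) (sZi q) * lp emb r (sZ (inverse q)) (sZi q)
                          * lp emb (cnj \<circ> r) (sZi q) (sZ (inverse q)))"
proof -
  let ?R = "lp emb r (sZ q) (sZi (inverse q))"
  let ?Rb = "lp emb (cnj \<circ> r) (sZi q) (sZ (inverse q))"
  have "\<rho> ?R = ?Rb" by (simp add: rho_lp rho_emb rho_Z rho_Zi)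
  then have "(u * ?R) * \<rho> (u * ?R) = emb half_phase_inv * (u * (?R * v) * ?Rb)"
    by (simp only: rho_mult rho_u mult.assoc emb_left_commute[of ?R] emb_left_commute_gens)
  also have "\<dots> = emb half_phase_inv * (u * v * lp emb r (sZ (inverse q)) (sZi q) * ?Rb)"
    by (simp only: lp_q_times_v mult.assoc)
  finally show ?thesis by (simp only: T_emb u_v)
qed

lemma low_positive_iff_laurent:
  "(\<forall>a\<in>grade 0 \<union> grade 1. a \<noteq> 0 \<longrightarrow> cpos (form a)) \<longleftrightarrow>
   (\<forall>r. finite {k. r k \<noteq> 0} \<and> (\<exists>k. r k \<noteq> 0) \<longrightarrow>
      cpos (T (lp emb r Z Zi * lp emb (cnj \<circ> r) Zi Z)) \<and>
      cpos (half_phase_inv * T (lp emb p (sZ (inverse q)) (sZi q) * lp emb r (sZ (inverse q)) (sZi q)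
                                 * lp emb (cnj \<circ> r) (sZi q) (sZ (inverse q)))))"
proof -
  have "(\<forall>a\<in>grade 0 \<union> grade 1. a \<noteq> 0 \<longrightarrow> cpos (form a)) \<longleftrightarrow>
        (\<forall>a\<in>grade 0 - {0}. cpos (form a)) \<and> (\<forall>a\<in>grade 1 - {0}. cpos (form a))"
    by blast
  also have "\<dots> \<longleftrightarrow> (\<forall>r. finite {k. r k \<noteq> 0} \<and> (\<exists>k. r k \<noteq> 0) \<longrightarrow>
      cpos (form (lp emb r Z Zi)) \<and> cpos (form (u * lp emb r (sZ q) (sZi (inverse q)))))"
    unfolding Ball_def grade0_nonzero_iff grade1_nonzero_iff by blast
  finally show ?thesis by (simp only: rho_lp rho_Z rho_Zi form_u_lp)
qed

end

theorem lemma3p2: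
  fixes q c :: real and p :: "int \<Rightarrow> complex"
    and emb :: "complex \<Rightarrow> 'a::ring_1" and u v Z Zi :: 'a
    and g \<rho> :: "'a \<Rightarrow> 'a" and T :: "'a \<Rightarrow> complex"
  assumes q: "0 < q" "q < 1"
    and P_fin: "finite {k. p k \<noteq> 0}"
    and P_roots: "\<exists>z. z \<noteq> 0 \<and> Pev p z = 0"
    and P_real: "\<forall>z. cmod z = 1 \<longrightarrow> Pev p z \<in> \<real>"
    and A: "is_A_P q p emb u v Z Zi"
    and c: "0 \<le> c" "c < 1"
    and g: "is_g emb u v Z Zi (exp (2 * complex_of_real pi * \<i> * complex_of_real c)) g"
    and rho: "is_rho emb u v Z Zi c \<rho>"
    and T: "twisted_trace emb g T"
  shows "(positive_trace \<rho> T \<longleftrightarrow>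
           (\<forall>a \<in> Adeg q emb Z Zi 0 \<union> Adeg q emb Z Zi 1. a \<noteq> 0 \<longrightarrow> cpos (T (a * \<rho> a))))
       \<and> ((\<forall>a \<in> Adeg q emb Z Zi 0 \<union> Adeg q emb Z Zi 1. a \<noteq> 0 \<longrightarrow> cpos (T (a * \<rho> a))) \<longleftrightarrow>
           (\<forall>r. finite {k. r k \<noteq> 0} \<and> (\<exists>k. r k \<noteq> 0) \<longrightarrow>
              cpos (T (lp emb r Z Zi * lp emb (cnj \<circ> r) Zi Z)) \<and>
              cpos (exp (- (complex_of_real pi * \<i> * complex_of_real c)) *
                T (lp emb p (emb (complex_of_real (inverse q)) * Z) (emb (complex_of_real q) * Zi)
                   * lp emb r (emb (complex_of_real (inverse q)) * Z) (emb (complex_of_real q) * Zi)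
                   * lp emb (cnj \<circ> r) (emb (complex_of_real q) * Zi) (emb (complex_of_real (inverse q)) * Z)))))"
proof -
  interpret gwa_trace q p emb u v Z Zi c g \<rho> T
    using q P_fin A g rho T by unfold_locales auto
  show ?thesis
    using positive_trace_if_low_positive low_positive_iff_laurent
    unfolding positive_trace_def by blast
qed

end
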